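(* Let $D$ be a product distribution on $\{0,1\}^n$ with $\mu_i=P(X_i=1)\in(0,1)$ and $\sigma_i=\sqrt{\mu_i(1-\mu_i)}$, and let $f(x)=\prod_{i\in T_1}x_i\prod_{j\in T_0}(1-x_j)$ with $T_0,T_1$ disjoint and $d=|T_0|+|T_1|$. Then, with respect to the basis $\phi_S(x)=\prod_{i\in S}\frac{x_i-\mu_i}{\sigma_i}$, $$L_1(f)=\prod_{i\in T_1}(\mu_i+\sigma_i)\prod_{j\in T_0}(1-\mu_j+\sigma_j)\le 1.21^d.$$
   Context: Fourier coefficients are $\hat f_S=\mathbb{E}_D[f(X)\phi_S(X)]$ and the spectral norm is $L_1(f)=\sum_{S\subseteq[n]}|\hat f_S|$. (This is the BN-induced basis for the BN with no edges.) *)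

theory Defs
  imports "HOL-Analysis.Analysis"
begin

text \<open>Points of {0,1}^n are encoded as functions x :: nat => real with x i in {0,1}
  for i < n and x i = 0 for i >= n (canonical representation).\<close>

definition cube :: "nat \<Rightarrow> (nat \<Rightarrow> real) set" where
  "cube n = {x. (\<forall>i<n. x i = 0 \<or> x i = 1) \<and> (\<forall>i\<ge>n. x i = 0)}"

definition prod_pmf :: "nat \<Rightarrow> (nat \<Rightarrow> real) \<Rightarrow> (nat \<Rightarrow> real) \<Rightarrow> real" where
  "prod_pmf n mu x = (\<Prod>i<n. if x i = 1 then mu i else 1 - mu i)"

definition expect :: "nat \<Rightarrow> (nat \<Rightarrow> real) \<Rightarrow> ((nat \<Rightarrow> real) \<Rightarrow> real) \<Rightarrow> real" where
  "expect n mu g = (\<Sum>x\<in>cube n. prod_pmf n mu x * g x)"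

definition sigma :: "(nat \<Rightarrow> real) \<Rightarrow> nat \<Rightarrow> real" where
  "sigma mu i = sqrt (mu i * (1 - mu i))"

definition phi :: "(nat \<Rightarrow> real) \<Rightarrow> nat set \<Rightarrow> (nat \<Rightarrow> real) \<Rightarrow> real" where
  "phi mu S x = (\<Prod>i\<in>S. (x i - mu i) / sigma mu i)"

definition fourier_coeff :: "nat \<Rightarrow> (nat \<Rightarrow> real) \<Rightarrow> ((nat \<Rightarrow> real) \<Rightarrow> real) \<Rightarrow> nat set \<Rightarrow> real" where
  "fourier_coeff n mu f S = expect n mu (\<lambda>x. f x * phi mu S x)"

definition spectral_norm :: "nat \<Rightarrow> (nat \<Rightarrow> real) \<Rightarrow> ((nat \<Rightarrow> real) \<Rightarrow> real) \<Rightarrow> real" where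
  "spectral_norm n mu f = (\<Sum>S\<in>Pow {..<n}. \<bar>fourier_coeff n mu f S\<bar>)"

end

theory Submission
  imports Defs
begin

text \<open>Both the conjunction f and every basis function phi_S are products of functions of
  single coordinates, so under a product distribution each Fourier coefficient factors
  into one-dimensional expectations: coordinate i contributes sigma_i (g_i(1) - g_i(0)) if
  i is in S and E[g_i(X_i)] otherwise. Summing the absolute values over all S then
  factors as well, giving mu_i + sigma_i for i in T1, 1 - mu_j + sigma_j for j in T0 and 1
  elsewhere. The bound follows from m + sqrt(m(1-m)) <= 1.21, which holds for every real
  m <= 1.21.\<close>

lemma bij_betw_cube_Suc:
  "bij_betw (\<lambda>(x, b). x(n := b)) (cube n \<times> {0, 1}) (cube (Suc n))"
  unfolding bij_betw_def
proof
  show "inj_on (\<lambda>(x, b). x(n := b)) (cube n \<times> {0, 1})"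
  proof (rule inj_onI, clarify)
    fix x y :: "nat \<Rightarrow> real" and b c :: real
    assume "x \<in> cube n" "y \<in> cube n" and eq: "x(n := b) = y(n := c)"
    then have "x n = 0" "y n = 0" unfolding cube_def by auto
    then have "x = (x(n := b))(n := 0)" "y = (y(n := c))(n := 0)" by auto
    with eq have "x = y" by metis
    moreover have "b = c" using fun_cong[OF eq, of n] by simp
    ultimately show "x = y \<and> b = c" ..
  qed
  have "z \<in> (\<lambda>(x, b). x(n := b)) ` (cube n \<times> {0, 1})" if "z \<in> cube (Suc n)" for z
  proof
    show "z = (\<lambda>(x, b). x(n := b)) (z(n := 0), z n)" by simp
    show "(z(n := 0), z n) \<in> cube n \<times> {0, 1}"
      using that unfolding cube_def by (auto simp: less_Suc_eq)
  qed
  moreover have "(\<lambda>(x, b). x(n := b)) ` (cube n \<times> {0, 1}) \<subseteq> cube (Suc n)"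
    unfolding cube_def by (auto simp: less_Suc_eq)
  ultimately show "(\<lambda>(x, b). x(n := b)) ` (cube n \<times> {0, 1}) = cube (Suc n)" by blast
qed

lemma sum_cube_prod:
  fixes w :: "nat \<Rightarrow> real \<Rightarrow> 'a :: comm_semiring_1"
  shows "(\<Sum>x\<in>cube n. \<Prod>i<n. w i (x i)) = (\<Prod>i<n. w i 1 + w i 0)"
proof (induction n)
  case 0
  have "cube 0 = {\<lambda>_. 0}" unfolding cube_def by auto
  then show ?case by simp
next
  case (Suc n)
  have "(\<Sum>z\<in>cube (Suc n). \<Prod>i<Suc n. w i (z i))
      = (\<Sum>p\<in>cube n \<times> {0, 1}. \<Prod>i<Suc n. w i (((\<lambda>(x, b). x(n := b)) p) i))"
    by (rule sum.reindex_bij_betw[OF bij_betw_cube_Suc, symmetric])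
  also have "\<dots> = (\<Sum>(x, b)\<in>cube n \<times> {0, 1}. (\<Prod>i<n. w i (x i)) * w n b)"
    by (rule sum.cong) (auto simp: prod.lessThan_Suc)
  also have "\<dots> = (\<Sum>x\<in>cube n. (\<Prod>i<n. w i (x i)) * (w n 1 + w n 0))"
    by (simp add: sum.cartesian_product' algebra_simps)
  finally show ?case by (simp add: Suc sum_distrib_right[symmetric] prod.lessThan_Suc)
qed

lemma expect_coordinate_product:
  "expect n mu (\<lambda>x. \<Prod>i<n. h i (x i)) = (\<Prod>i<n. mu i * h i 1 + (1 - mu i) * h i 0)"
proof -
  have "expect n mu (\<lambda>x. \<Prod>i<n. h i (x i))
      = (\<Sum>x\<in>cube n. \<Prod>i<n. (if x i = 1 then mu i else 1 - mu i) * h i (x i))"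
    unfolding expect_def prod_pmf_def by (simp add: prod.distrib)
  also have "\<dots> = (\<Prod>i<n. mu i * h i 1 + (1 - mu i) * h i 0)"
    by (subst sum_cube_prod) simp
  finally show ?thesis .
qed

lemma prod_subset_lessThan:
  fixes n :: nat
  assumes "A \<subseteq> {..<n}"
  shows "(\<Prod>i\<in>A. g i) = (\<Prod>i<n. if i \<in> A then g i else 1)"
  using prod.inter_restrict[of "{..<n}" g A] assms by (simp add: Int_absorb1)

lemma sigma_pos: "0 < mu i \<Longrightarrow> mu i < 1 \<Longrightarrow> 0 < sigma mu i"
  unfolding sigma_def by simp

lemma sigma_mult_self:
  "0 \<le> mu i \<Longrightarrow> mu i \<le> 1 \<Longrightarrow> sigma mu i * sigma mu i = mu i * (1 - mu i)"
  unfolding sigma_def by simp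

lemma fourier_coeff_coordinate_product:
  fixes g :: "nat \<Rightarrow> real \<Rightarrow> real"
  assumes "\<forall>i<n. 0 < mu i \<and> mu i < 1" and "S \<subseteq> {..<n}"
  shows "fourier_coeff n mu (\<lambda>x. \<Prod>i<n. g i (x i)) S
       = (\<Prod>i<n. if i \<in> S then sigma mu i * (g i 1 - g i 0)
                 else mu i * g i 1 + (1 - mu i) * g i 0)"
proof -
  define h where "h i t = g i t * (if i \<in> S then (t - mu i) / sigma mu i else 1)" for i t
  have "(\<Prod>i<n. g i (x i)) * phi mu S x = (\<Prod>i<n. h i (x i))" for x
    unfolding phi_def h_def prod_subset_lessThan[OF assms(2)] by (simp add: prod.distrib)
  then have "fourier_coeff n mu (\<lambda>x. \<Prod>i<n. g i (x i)) S
      = (\<Prod>i<n. mu i * h i 1 + (1 - mu i) * h i 0)"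
    unfolding fourier_coeff_def by (simp add: expect_coordinate_product)
  also have "\<dots> = (\<Prod>i<n. if i \<in> S then sigma mu i * (g i 1 - g i 0)
                          else mu i * g i 1 + (1 - mu i) * g i 0)"
  proof (rule prod.cong[OF refl])
    fix i assume "i \<in> {..<n}"
    then have "0 < mu i" "mu i < 1" using assms(1) by auto
    then have sigma_i: "0 < sigma mu i" "mu i * (1 - mu i) / sigma mu i = sigma mu i"
      using sigma_pos[of mu i] sigma_mult_self[of mu i] by (simp_all add: field_simps)
    have "mu i * h i 1 + (1 - mu i) * h i 0 = mu i * (1 - mu i) / sigma mu i * (g i 1 - g i 0)"
      if "i \<in> S"
      using that sigma_i(1) by (simp add: h_def field_simps)
    with sigma_i(2) show "mu i * h i 1 + (1 - mu i) * h i 0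
        = (if i \<in> S then sigma mu i * (g i 1 - g i 0) else mu i * g i 1 + (1 - mu i) * g i 0)"
      by (simp add: h_def)
  qed
  finally show ?thesis .
qed

lemma spectral_norm_coordinate_product:
  fixes g :: "nat \<Rightarrow> real \<Rightarrow> real"
  assumes "\<forall>i<n. 0 < mu i \<and> mu i < 1"
  shows "spectral_norm n mu (\<lambda>x. \<Prod>i<n. g i (x i))
       = (\<Prod>i<n. sigma mu i * \<bar>g i 1 - g i 0\<bar> + \<bar>mu i * g i 1 + (1 - mu i) * g i 0\<bar>)"
proof -
  define p where "p i = sigma mu i * \<bar>g i 1 - g i 0\<bar>" for i
  define q where "q i = \<bar>mu i * g i 1 + (1 - mu i) * g i 0\<bar>" for i
  have "\<bar>fourier_coeff n mu (\<lambda>x. \<Prod>i<n. g i (x i)) S\<bar>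
      = (\<Prod>i\<in>S. p i) * (\<Prod>i\<in>{..<n} - S. q i)" if "S \<in> Pow {..<n}" for S
  proof -
    have "{..<n} \<inter> {i. i \<in> S} = S" "{..<n} \<inter> - {i. i \<in> S} = {..<n} - S"
      using that by auto
    moreover have "\<bar>fourier_coeff n mu (\<lambda>x. \<Prod>i<n. g i (x i)) S\<bar>
        = (\<Prod>i<n. if i \<in> S then p i else q i)"
      using that assms sigma_pos
      by (force simp: fourier_coeff_coordinate_product abs_prod abs_mult p_def q_def
          intro!: prod.cong)
    ultimately show ?thesis by (simp add: prod.If_cases)
  qed
  then have "spectral_norm n mu (\<lambda>x. \<Prod>i<n. g i (x i))
      = (\<Sum>S\<in>Pow {..<n}. (\<Prod>i\<in>S. p i) * (\<Prod>i\<in>{..<n} - S. q i))"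
    unfolding spectral_norm_def by (rule sum.cong[OF refl])
  also have "\<dots> = (\<Prod>i<n. p i + q i)" by (simp add: prod_add)
  finally show ?thesis unfolding p_def q_def .
qed

lemma plus_sqrt_mult_one_minus_le:
  fixes m :: real
  assumes "m \<le> 1.21"
  shows "m + sqrt (m * (1 - m)) \<le> 1.21"
proof -
  have "m * (1 - m) \<le> (1.21 - m)\<^sup>2"
    using zero_le_power2[of "m - 0.855"] by (simp add: power2_eq_square algebra_simps)
  then have "sqrt (m * (1 - m)) \<le> \<bar>1.21 - m\<bar>"
    using real_sqrt_le_mono real_sqrt_abs by metis
  with assms show ?thesis by simp
qed

lemma spectral_norm_conjunction:
  fixes T0 T1 :: "nat set"
  assumes "\<forall>i<n. 0 < mu i \<and> mu i < 1"
    and "T0 \<subseteq> {..<n}" and "T1 \<subseteq> {..<n}" and "T0 \<inter> T1 = {}"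
  shows "spectral_norm n mu (\<lambda>x. (\<Prod>i\<in>T1. x i) * (\<Prod>j\<in>T0. 1 - x j))
       = (\<Prod>i\<in>T1. mu i + sigma mu i) * (\<Prod>j\<in>T0. 1 - mu j + sigma mu j)"
proof -
  define g where "g i t = (if i \<in> T1 then t else 1) * (if i \<in> T0 then 1 - t else 1)"
    for i and t :: real
  have "(\<lambda>x. (\<Prod>i\<in>T1. x i) * (\<Prod>j\<in>T0. 1 - x j)) = (\<lambda>x. \<Prod>i<n. g i (x i))"
    by (simp add: g_def prod.distrib prod_subset_lessThan[OF assms(2)]
        prod_subset_lessThan[OF assms(3)])
  moreover have "sigma mu i * \<bar>g i 1 - g i 0\<bar> + \<bar>mu i * g i 1 + (1 - mu i) * g i 0\<bar>
      = (if i \<in> T1 then mu i + sigma mu i else 1) * (if i \<in> T0 then 1 - mu i + sigma mu i else 1)"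
    if "i < n" for i
    using assms(1,4) that sigma_pos[of mu i] by (auto simp: g_def)
  ultimately show ?thesis
    using assms(1) by (simp add: spectral_norm_coordinate_product prod.distrib
        prod_subset_lessThan[OF assms(2)] prod_subset_lessThan[OF assms(3)])
qed

lemma prod_mean_plus_sigma_le:
  fixes T0 T1 :: "nat set"
  assumes "\<forall>i<n. 0 < mu i \<and> mu i < 1" and "T0 \<subseteq> {..<n}" and "T1 \<subseteq> {..<n}"
  shows "(\<Prod>i\<in>T1. mu i + sigma mu i) * (\<Prod>j\<in>T0. 1 - mu j + sigma mu j)
       \<le> 1.21 ^ (card T0 + card T1)"
proof -
  have "0 \<le> mu i + sigma mu i \<and> mu i + sigma mu i \<le> 1.21"
    and "0 \<le> 1 - mu i + sigma mu i \<and> 1 - mu i + sigma mu i \<le> 1.21" if "i < n" for i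
    using assms(1) that sigma_pos[of mu i] plus_sqrt_mult_one_minus_le[of "mu i"]
      plus_sqrt_mult_one_minus_le[of "1 - mu i"] by (auto simp: sigma_def mult.commute)
  then have "(\<Prod>i\<in>T1. mu i + sigma mu i) \<le> 1.21 ^ card T1"
    and "(\<Prod>j\<in>T0. 1 - mu j + sigma mu j) \<le> 1.21 ^ card T0"
    and "0 \<le> (\<Prod>j\<in>T0. 1 - mu j + sigma mu j)"
    using assms(2,3) by (auto intro!: prod_le_power prod_nonneg)
  then have "(\<Prod>i\<in>T1. mu i + sigma mu i) * (\<Prod>j\<in>T0. 1 - mu j + sigma mu j)
      \<le> 1.21 ^ card T1 * 1.21 ^ card T0"
    by (intro mult_mono) auto
  then show ?thesis by (simp add: power_add mult.commute)
qed

theorem mainTheorem6: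
  fixes n :: nat and mu :: "nat \<Rightarrow> real" and T0 T1 :: "nat set"
  assumes "\<forall>i<n. 0 < mu i \<and> mu i < 1"
    and "T0 \<subseteq> {..<n}" and "T1 \<subseteq> {..<n}" and "T0 \<inter> T1 = {}"
  shows "spectral_norm n mu (\<lambda>x. (\<Prod>i\<in>T1. x i) * (\<Prod>j\<in>T0. 1 - x j))
           = (\<Prod>i\<in>T1. mu i + sigma mu i) * (\<Prod>j\<in>T0. 1 - mu j + sigma mu j)
      \<and> (\<Prod>i\<in>T1. mu i + sigma mu i) * (\<Prod>j\<in>T0. 1 - mu j + sigma mu j)
           \<le> 1.21 ^ (card T0 + card T1)"
  using spectral_norm_conjunction[OF assms] prod_mean_plus_sigma_le[OF assms(1-3)] by simp

end
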